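(* Let $n\ge1$ and suppose that for every $0\le k<n$, $\mathbb{Z}_k$ is a $1$-Gray code for $\mathcal{Z}_k$ with $\mathrm{first}(\mathbb{Z}_k)=0(001)^\star$ and $\mathrm{last}(\mathbb{Z}_k)=(001)^\star$ (where $\mathbb{Z}_0=(\epsilon)$). Let $i,j$ be integers with $1\le j<i\le n$. Then: (i) if $3\le i+j<n$, the list $\mathbb{L}=0^i1^j\cdot\mathbb{Z}_{n-i-j}$ is a $1$-Gray code for $0^i1^j\cdot\mathcal{Z}_{n-i-j}$ with $\mathrm{first}(\mathbb{L})=0^i1^j0(001)^\star$ and $\mathrm{last}(\mathbb{L})=0^i1^j(001)^\star$; when $i+j=n$ the list $\mathbb{L}$ contains only the word $0^i1^j$; (ii) if $3\le i+j<n-1$, the list $\mathbb{L}=0^i1^{j+1}\cdot\mathbb{Z}_{n-i-j-1}\circ0^i1^j\cdot\mathbb{Z}_{n-i-j}$ is a $1$-Gray code for $0^i1^{j+1}\cdot\mathcal{Z}_{n-i-j-1}\cup0^i1^j\cdot\mathcal{Z}_{n-i-j}$ with $\mathrm{first}(\mathbb{L})=0^i1^{j+1}0(001)^\star$ and $\mathrm{last}(\mathbb{L})=0^i1^j(001)^\star$; when $i+j+1=n$, $\mathbb{L}=0^i1^{j+1}\circ0^i1^j0$; (iii) if $3\le i+j<n$, the list $\mathbb{L}=0^i1^j\cdot\mathbb{Z}_{n-i-j}\circ\overline{0^{i-1}1^{j+1}\cdot\mathbb{Z}_{n-i-j}}$ is a $1$-Gray code for $0^i1^j\cdot\mathcal{Z}_{n-i-j}\cup0^{i-1}1^{j+1}\cdot\mathcal{Z}_{n-i-j}$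 with $\mathrm{first}(\mathbb{L})=0^i1^j0(001)^\star$ and $\mathrm{last}(\mathbb{L})=0^{i-1}1^{j+1}0(001)^\star$; when $i+j=n$, $\mathbb{L}=0^i1^j\circ0^{i-1}1^{j+1}$; (iv) if $3\le i+j\le n$, the list $\mathbb{L}=\overline{0^i1^j\cdot\mathbb{Z}_{n-i-j}}\circ0^{i-1}1^{j+1}\cdot\mathbb{Z}_{n-i-j}$ is a $1$-Gray code for $0^i1^j\cdot\mathcal{Z}_{n-i-j}\cup0^{i-1}1^{j+1}\cdot\mathcal{Z}_{n-i-j}$ with $\mathrm{first}(\mathbb{L})=0^i1^j(001)^\star$ and $\mathrm{last}(\mathbb{L})=0^{i-1}1^{j+1}(001)^\star$.
   Context: A binary word is $1$-decreasing if for every maximal run of $0$s, of length $a>0$, together with the (possibly empty) maximal run of $1$s immediately following it, of length $b$, one has $a>b$. For $m\ge1$, $\mathcal{Z}_m$ is the set of $1$-decreasing words of length $m$ starting with $0$; $\mathcal{Z}_0=\{\epsilon\}$. A $1$-Gray code for a set of equal-length words is an ordered list of all its elements, each once, with consecutive words differing in at most one position. For a list $\mathbb{L}$ and a word $w$: $w\cdot\mathbb{L}$ prefixes $w$ to every word of $\mathbb{L}$ (and $w\cdot\mathcal{A}=\{wa:a\in\mathcal{A}\}$ for sets); $\circ$ is list concatenation; $\overline{\mathbb{L}}$ is the reverse list; $\mathrm{first}(\mathbb{L})$, $\mathrm{last}(\mathbb{L})$ are its first and last elements. In a word of prescribed length (here $n$) written $u(001)^\star$, $(001)^\star$ denotes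 the prefix of $001001\cdots$ of the length needed to reach that total length. *)

theory Defs
  imports Main
begin

text \<open>Binary words are bool lists: False stands for the letter 0, True for 1.\<close>

definition zeros :: "nat \<Rightarrow> bool list" where "zeros k = replicate k False"
definition ones :: "nat \<Rightarrow> bool list" where "ones k = replicate k True"

text \<open>1-decreasing: every maximal run of 0s (starting at position p, length a > 0)
  followed by the maximal (possibly empty) run of 1s (length b) satisfies a > b.\<close>
definition one_decreasing :: "bool list \<Rightarrow> bool" where
  "one_decreasing w \<longleftrightarrow>
     (\<forall>p a b. 0 < a \<and> p + a + b \<le> length w
        \<and> (p = 0 \<or> w ! (p - 1))
        \<and> (\<forall>k<a. \<not> w ! (p + k))
        \<and> (p + a = length w \<or> w ! (p + a))
        \<and> (\<forall>k<b. w ! (p + a + k))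
        \<and> (p + a + b = length w \<or> \<not> w ! (p + a + b))
        \<longrightarrow> b < a)"

definition Zset :: "nat \<Rightarrow> bool list set" where
  "Zset m = {w. length w = m \<and> (m \<ge> 1 \<longrightarrow> hd w = False) \<and> one_decreasing w}"

definition pat001 :: "nat \<Rightarrow> bool list" where
  "pat001 m = map (\<lambda>k. k mod 3 = 2) [0..<m]"

definition prefix_set :: "bool list \<Rightarrow> bool list set \<Rightarrow> bool list set" where
  "prefix_set u A = (\<lambda>a. u @ a) ` A"

definition prefix_list :: "bool list \<Rightarrow> bool list list \<Rightarrow> bool list list" where
  "prefix_list u L = map (\<lambda>a. u @ a) L"

definition differ_at_most_one :: "bool list \<Rightarrow> bool list \<Rightarrow> bool" where
  "differ_at_most_one u v \<longleftrightarrow>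
     length u = length v \<and> card {p. p < length u \<and> u ! p \<noteq> v ! p} \<le> 1"

definition gray1 :: "bool list list \<Rightarrow> bool list set \<Rightarrow> bool" where
  "gray1 L S \<longleftrightarrow> distinct L \<and> set L = S \<and>
     (\<forall>k. Suc k < length L \<longrightarrow> differ_at_most_one (L ! k) (L ! Suc k))"

end

theory Submission
  imports Defs
begin

text \<open>Every list in question is a prefixed copy of a Gray code for some Z_k, or two such
  copies glued together. Prefixing preserves the Gray property, and gluing two Gray codes
  gives one as soon as the blocks are disjoint and meet in words differing in one letter.
  In (iii) and (iv) the prefixes 0^i 1^j and 0^(i-1) 1^(j+1) differ only at position i, so
  a copy followed by the reversed copy of the same code (or vice versa) meets in two words
  with the same suffix. In (ii) the first block ends with 0^i 1^j 1 (001)* and the second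
  starts with 0^i 1^j 0 (001)*; the blocks are disjoint because every nonempty word of a
  set Z_k starts with 0.\<close>

lemma differ_at_most_one_sym: "differ_at_most_one u v \<longleftrightarrow> differ_at_most_one v u"
proof -
  have "{p. p < length u \<and> u ! p \<noteq> v ! p} = {p. p < length v \<and> v ! p \<noteq> u ! p}"
    if "length u = length v"
    using that by auto
  then show ?thesis unfolding differ_at_most_one_def by (metis (no_types, lifting))
qed

lemma differ_at_most_one_append_left:
  assumes "differ_at_most_one a b"
  shows "differ_at_most_one (u @ a) (u @ b)"
proof -
  have "{p. p < length (u @ a) \<and> (u @ a) ! p \<noteq> (u @ b) ! p}
        = (+) (length u) ` {p. p < length a \<and> a ! p \<noteq> b ! p}"
  proof (intro set_eqI iffI)
    fix p assume "p \<in> {p. p < length (u @ a) \<and> (u @ a) ! p \<noteq> (u @ b) ! p}"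
    then show "p \<in> (+) (length u) ` {p. p < length a \<and> a ! p \<noteq> b ! p}"
      by (cases "p < length u") (auto simp: nth_append image_iff intro!: exI[of _ "p - length u"])
  qed (auto simp: nth_append)
  moreover have "length a = length b" "card {p. p < length a \<and> a ! p \<noteq> b ! p} \<le> 1"
    using assms unfolding differ_at_most_one_def by auto
  ultimately show ?thesis
    unfolding differ_at_most_one_def by (simp add: card_image)
qed

lemma differ_at_most_one_single: "differ_at_most_one (x @ a # y) (x @ b # y)"
proof -
  have "{p. p < length (x @ a # y) \<and> (x @ a # y) ! p \<noteq> (x @ b # y) ! p} \<subseteq> {length x}"
  proof
    fix p assume p: "p \<in> {p. p < length (x @ a # y) \<and> (x @ a # y) ! p \<noteq> (x @ b # y) ! p}"
    have "p < length x \<or> p = length x \<or> (\<exists>r. p = length x + Suc r)"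
      by (metis add_Suc_right less_imp_Suc_add linorder_neqE_nat)
    then show "p \<in> {length x}" using p by (auto simp: nth_append)
  qed
  then show ?thesis
    unfolding differ_at_most_one_def by (simp add: card_mono[of "{length x}", simplified])
qed

lemma gray1_iff_successively:
  "gray1 L S \<longleftrightarrow> distinct L \<and> set L = S \<and> successively differ_at_most_one L"
  unfolding gray1_def successively_conv_nth by simp

lemma gray1_prefix_list: "gray1 L S \<Longrightarrow> gray1 (prefix_list u L) (prefix_set u S)"
  unfolding gray1_iff_successively prefix_list_def prefix_set_def
  by (auto simp: distinct_map inj_on_def successively_map differ_at_most_one_append_left
      elim: successively_mono)

lemma gray1_rev: "gray1 L S \<Longrightarrow> gray1 (rev L) S"
  unfolding gray1_iff_successively by (simp add: differ_at_most_one_sym)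

lemma gray1_append:
  assumes "gray1 A S" "gray1 B T" "S \<inter> T = {}"
    and "A \<noteq> [] \<Longrightarrow> B \<noteq> [] \<Longrightarrow> differ_at_most_one (last A) (hd B)"
  shows "gray1 (A @ B) (S \<union> T)"
  using assms unfolding gray1_iff_successively by (auto simp: successively_append_iff)

lemma hd_prefix_list: "L \<noteq> [] \<Longrightarrow> hd (prefix_list u L) = u @ hd L"
  unfolding prefix_list_def by (simp add: hd_map)

lemma last_prefix_list: "L \<noteq> [] \<Longrightarrow> last (prefix_list u L) = u @ last L"
  unfolding prefix_list_def by (simp add: last_map)

lemma prefix_list_eq_Nil_iff [simp]: "prefix_list u L = [] \<longleftrightarrow> L = []"
  unfolding prefix_list_def by simp

lemma prefix_list_singleton [simp]: "prefix_list u [w] = [u @ w]"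
  unfolding prefix_list_def by simp

lemma disjoint_prefix_set_same_length:
  "length u = length v \<Longrightarrow> u \<noteq> v \<Longrightarrow> prefix_set u A \<inter> prefix_set v B = {}"
  unfolding prefix_set_def by auto

lemma gray1_prefix_list_reflected:
  assumes "gray1 Z S" "a \<noteq> b"
  shows "gray1 (prefix_list (x @ a # y) Z @ rev (prefix_list (x @ b # y) Z))
           (prefix_set (x @ a # y) S \<union> prefix_set (x @ b # y) S)"
    and "gray1 (rev (prefix_list (x @ a # y) Z) @ prefix_list (x @ b # y) Z)
           (prefix_set (x @ a # y) S \<union> prefix_set (x @ b # y) S)"
  using assms
  by (auto intro!: gray1_append gray1_prefix_list gray1_rev disjoint_prefix_set_same_length
      simp: hd_prefix_list last_prefix_list hd_rev last_rev differ_at_most_one_single)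

lemma gray1_prefix_list_snoc_append:
  assumes "gray1 Z S" "gray1 Z' S'" and Z: "Z \<noteq> []" "Z' \<noteq> []"
    and junction: "hd Z' = False # last Z" and S': "\<forall>w\<in>S'. hd w = False"
  shows "gray1 (prefix_list (x @ [True]) Z @ prefix_list x Z')
           (prefix_set (x @ [True]) S \<union> prefix_set x S')"
proof (rule gray1_append)
  show "prefix_set (x @ [True]) S \<inter> prefix_set x S' = {}"
    using S' unfolding prefix_set_def by auto
  show "differ_at_most_one (last (prefix_list (x @ [True]) Z)) (hd (prefix_list x Z'))"
    using Z junction differ_at_most_one_single[of x True "last Z" False]
    by (simp add: hd_prefix_list last_prefix_list)
qed (use assms gray1_prefix_list in auto)

lemma zeros_Suc: "zeros (Suc k) = zeros k @ [False]"
  unfolding zeros_def by (simp add: replicate_append_same)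

lemma ones_Suc: "ones (Suc k) = True # ones k"
  unfolding ones_def by simp

lemma ones_Suc_snoc: "ones (Suc k) = ones k @ [True]"
  unfolding ones_def by (simp add: replicate_append_same)

lemma zeros_mem_Zset: "zeros m \<in> Zset m"
proof -
  have "b = 0" if "p + a + b \<le> length (zeros m)" "\<forall>k<b. zeros m ! (p + a + k)" for p a b
  proof (rule ccontr)
    assume "b \<noteq> 0"
    then have "zeros m ! (p + a)" "p + a < m"
      using that by (auto simp: zeros_def dest: spec[of _ 0])
    then show False
      by (simp add: zeros_def)
  qed
  then have "one_decreasing (zeros m)"
    unfolding one_decreasing_def by fastforce
  then show ?thesis
    unfolding Zset_def by (cases m) (simp_all add: zeros_def)
qed

lemma gray1_Zset_ne_Nil: "gray1 L (Zset k) \<Longrightarrow> L \<noteq> []"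
  using zeros_mem_Zset[of k] unfolding gray1_def by auto

lemma hd_Zset: "w \<in> Zset m \<Longrightarrow> 1 \<le> m \<Longrightarrow> hd w = False"
  unfolding Zset_def by simp

lemma Zset_1: "Zset 1 = {[False]}"
proof
  show "Zset 1 \<subseteq> {[False]}"
  proof
    fix w assume w: "w \<in> Zset 1"
    then have "length w = 1" "hd w = False"
      by (simp_all add: Zset_def)
    then show "w \<in> {[False]}"
      by (cases w) simp_all
  qed
  show "{[False]} \<subseteq> Zset 1"
    using zeros_mem_Zset[of 1] by (simp add: zeros_def)
qed

lemma gray1_Zset_1:
  assumes "gray1 L (Zset 1)"
  shows "L = [[False]]"
proof -
  have L: "distinct L" "set L = {[False]}"
    using assms unfolding gray1_def Zset_1 by simp_all
  then have "length L = 1"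
    using distinct_card[of L] by simp
  then obtain w where "L = [w]"
    by (cases L) simp_all
  with L(2) show ?thesis
    by simp
qed

theorem lemma3:
  fixes n i j :: nat and Zl :: "nat \<Rightarrow> bool list list"
  assumes n: "n \<ge> 1"
    and Z0: "Zl 0 = [[]]"
    and Zg: "\<And>k. k < n \<Longrightarrow> gray1 (Zl k) (Zset k)"
    and Zfl: "\<And>k. 1 \<le> k \<Longrightarrow> k < n \<Longrightarrow>
                 hd (Zl k) = False # pat001 (k - 1) \<and> last (Zl k) = pat001 k"
    and ij: "1 \<le> j" "j < i" "i \<le> n"
  shows
   "(3 \<le> i + j \<and> i + j < n \<longrightarrow>
       (let L = prefix_list (zeros i @ ones j) (Zl (n - i - j)) in
        gray1 L (prefix_set (zeros i @ ones j) (Zset (n - i - j)))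
        \<and> hd L = zeros i @ ones j @ False # pat001 (n - i - j - 1)
        \<and> last L = zeros i @ ones j @ pat001 (n - i - j)))
  \<and> (i + j = n \<longrightarrow> prefix_list (zeros i @ ones j) (Zl (n - i - j)) = [zeros i @ ones j])
  \<and> (3 \<le> i + j \<and> i + j < n - 1 \<longrightarrow>
       (let L = prefix_list (zeros i @ ones (j + 1)) (Zl (n - i - j - 1))
                @ prefix_list (zeros i @ ones j) (Zl (n - i - j)) in
        gray1 L (prefix_set (zeros i @ ones (j + 1)) (Zset (n - i - j - 1))
                 \<union> prefix_set (zeros i @ ones j) (Zset (n - i - j)))
        \<and> hd L = zeros i @ ones (j + 1) @ False # pat001 (n - i - j - 2)
        \<and> last L = zeros i @ ones j @ pat001 (n - i - j)))
  \<and> (i + j + 1 = n \<longrightarrow>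
       prefix_list (zeros i @ ones (j + 1)) (Zl (n - i - j - 1))
                @ prefix_list (zeros i @ ones j) (Zl (n - i - j))
       = [zeros i @ ones (j + 1), zeros i @ ones j @ [False]])
  \<and> (3 \<le> i + j \<and> i + j < n \<longrightarrow>
       (let L = prefix_list (zeros i @ ones j) (Zl (n - i - j))
                @ rev (prefix_list (zeros (i - 1) @ ones (j + 1)) (Zl (n - i - j))) in
        gray1 L (prefix_set (zeros i @ ones j) (Zset (n - i - j))
                 \<union> prefix_set (zeros (i - 1) @ ones (j + 1)) (Zset (n - i - j)))
        \<and> hd L = zeros i @ ones j @ False # pat001 (n - i - j - 1)
        \<and> last L = zeros (i - 1) @ ones (j + 1) @ False # pat001 (n - i - j - 1)))
  \<and> (i + j = n \<longrightarrow>
       prefix_list (zeros i @ ones j) (Zl (n - i - j))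
                @ rev (prefix_list (zeros (i - 1) @ ones (j + 1)) (Zl (n - i - j)))
       = [zeros i @ ones j, zeros (i - 1) @ ones (j + 1)])
  \<and> (3 \<le> i + j \<and> i + j \<le> n \<longrightarrow>
       (let L = rev (prefix_list (zeros i @ ones j) (Zl (n - i - j)))
                @ prefix_list (zeros (i - 1) @ ones (j + 1)) (Zl (n - i - j)) in
        gray1 L (prefix_set (zeros i @ ones j) (Zset (n - i - j))
                 \<union> prefix_set (zeros (i - 1) @ ones (j + 1)) (Zset (n - i - j)))
        \<and> hd L = zeros i @ ones j @ pat001 (n - i - j)
        \<and> last L = zeros (i - 1) @ ones (j + 1) @ pat001 (n - i - j)))"
proof -
  have Z_ne: "Zl k \<noteq> []" if "k < n" for k
    using gray1_Zset_ne_Nil Zg that by blast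
  have Z_last: "last (Zl k) = pat001 k" if "k < n" for k
    using Zfl[OF _ that] Z0 by (cases k) (simp_all add: pat001_def)
  obtain i' where i: "i = Suc i'"
    using ij by (cases i) simp_all
  show ?thesis
    apply (intro conjI impI; (elim conjE)?)
    subgoal
      by (simp add: Let_def Zg gray1_prefix_list hd_prefix_list last_prefix_list Z_ne Zfl Z_last)
    subgoal
      using Z0 by simp
    subgoal
      using gray1_prefix_list_snoc_append[OF Zg Zg Z_ne Z_ne,
          of "n - i - j - 1" "n - i - j" "zeros i @ ones j"] hd_Zset[of _ "n - i - j"]
      by (simp add: Let_def ones_Suc_snoc hd_prefix_list last_prefix_list Z_ne Zfl Z_last
          numeral_2_eq_2)
    subgoal premises n_eq
      using Z0 gray1_Zset_1[OF Zg[of 1]] ij by (simp add: ones_Suc_snoc flip: n_eq)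
    subgoal
      using gray1_prefix_list_reflected(1)[OF Zg, of "n - i - j" False True "zeros i'" "ones j"]
      by (simp add: Let_def i zeros_Suc ones_Suc hd_prefix_list last_rev Z_ne Zfl)
    subgoal
      using Z0 by simp
    subgoal
      using gray1_prefix_list_reflected(2)[OF Zg, of "n - i - j" False True "zeros i'" "ones j"]
      by (simp add: Let_def i zeros_Suc ones_Suc last_prefix_list hd_rev Z_ne Z_last)
    done
qed

end
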